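(* Let $\mathcal A=(Q,\Sigma,\delta,\rho)$ be a connected bireversible Mealy automaton whose labeled orbit tree $\mathfrak t(\mathcal A)$ has no active self-liftable branch, let $\mathfrak j$ be a jungle tree of $\mathfrak t(\mathcal A)$ with trunk of length $n$, and let $S$ be a liana covering up $\mathfrak j$. Then for all $\mathbf t,\mathbf u,\mathbf v\in Q^*$ with $\mathbf{tuv}\in S$, there exists $\mathbf w\in Q^*$ such that $\mathbf{tuvwu}\in S$.
   Context: Mealy automata. A Mealy automaton is $\mathcal A=(Q,\Sigma,\delta,\rho)$ with $Q,\Sigma$ finite non-empty sets, $\delta=(\delta_i\colon Q\to Q)_{i\in\Sigma}$, $\rho=(\rho_x\colon\Sigma\to\Sigma)_{x\in Q}$; it has a transition $x\xrightarrow{i\mid\rho_x(i)}\delta_i(x)$ for each $x,i$. It is invertible if each $\rho_x$ is a permutation of $\Sigma$, reversible if each $\delta_i$ is a permutation of $Q$, bireversible if it is invertible, reversible, and for each $j\in\Sigma$ the map $x\mapsto\delta_{\rho_x^{-1}(j)}(x)$ is a permutation of $Q$. It is connected if the directed graph on $Q$ with edges $x\to\delta_i(x)$ is connected. Extensions: $\rho_x(i\mathbf s)=\rho_x(i)\rho_{\delta_i(x)}(\mathbf s)$ on $\Sigma^*$; for $\mathbf u=x_1\cdots x_m$, $\rho_{\mathbf u}=\rho_{x_m}\circ\cdots\circ\rho_{x_1}$; dually $\delta_i(x\mathbf u)=\delta_i(x)\delta_{\rho_x(i)}(\mathbf u)$ on $Q^*$, $\delta_{i_1\cdots i_m}=\delta_{i_m}\circ\cdots\circ\delta_{i_1}$.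 The $n$-th power $\mathcal A^n$ has stateset $Q^n$ and transitions $\mathbf u\xrightarrow{i\mid\rho_{\mathbf u}(i)}\delta_i(\mathbf u)$; for reversible $\mathcal A$ its connected components are the orbits of $Q^n$ under the maps $\delta_{\mathbf s}$, $\mathbf s\in\Sigma^*$. Orbit tree. For reversible $\mathcal A$, $\mathfrak t(\mathcal A)$ is the rooted tree whose vertices at level $n\ge0$ are the connected components of $\mathcal A^n$, with an edge from the component of $\mathbf u\in Q^n$ to the component of $\mathbf ux$ for all $\mathbf u\in Q^n$, $x\in Q$; the edge $C\to D$ is labeled $\#D/\#C$. Paths go downward; $\top,\bot$ denote first and last vertex of a path; the level of an edge/path is that of its top vertex. A word in $Q^*\cup Q^\omega$ represents the initial path through the components of its prefixes. Edge $e$ is liftable to edge $f$ if every word of $\bot(e)$ has a suffix in $\bot(f)$; a path $(e_i)_{i\in I}$ is liftable to $(f_i)_{i\in I}$ if each $e_i$ is liftable to $f_i$. An edge $f$ is a legitimate child of $e$ if $\top(f)=\bot(e)$ and $f$ is liftable to $e$. A path or subtree $\mathfrak s$ is $k$-self-liftable ($k>0$) if for every $i\ge0$ every path in $\mathfrak s$ starting at level $i+k$ is liftable to a path in $\mathfrak s$ starting at level $i$; self-liftable if $k$-self-liftable for some $k>0$. A branch is an infinite initial path; active if its label sequence is not eventually constantly $1$. Jungle trees. Let $\mathbf e$ be a finite 1-self-liftable initial path of length $n$ whose last edge has at least two legitimate children, all of label $1$. The jungle tree $\mathfrak j(\mathbf e)$ consists of $\mathbf e$ (its trunk) together with all edges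 that are descendants of $\bot(\mathbf e)$ and liftable to the last edge of $\mathbf e$. Stems are the words of $\bot(\mathbf e)\subseteq Q^n$. A $\mathfrak j$-word is a word of $Q^*\cup Q^\omega$ representing an initial path of $\mathfrak j$. A liana covering up $\mathfrak j$ is a set $S=\mathbf w L_{\mathbf w}$ (together with the prefixes of $\mathbf w$) of $\mathfrak j$-words, where $\mathbf w\in Q^n$ is a stem and $L_{\mathbf w}\subseteq Q^*\cup Q^\omega$ is prefix-closed, such that each vertex of $\mathfrak j$ is represented by exactly one word of $S$ (equivalently, $L_{\mathbf w}$ viewed as a tree is regular of the same arity as $\mathfrak j$, the arity being the number of legitimate children of the last trunk edge). *)

theory Defs
  imports Complex_Main "HOL-Library.Sublist"
begin

text \<open>A Mealy automaton with finite nonempty stateset Q = UNIV :: 'q set and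
 alphabet Sigma = UNIV :: 's set is given by d (delta) and r (rho):
 transition  x --i|r x i--> d i x.\<close>

definition invertible :: "('q \<Rightarrow> 's \<Rightarrow> 's) \<Rightarrow> bool" where
  "invertible r \<longleftrightarrow> (\<forall>x. bij (r x))"

definition reversible :: "('s \<Rightarrow> 'q \<Rightarrow> 'q) \<Rightarrow> bool" where
  "reversible d \<longleftrightarrow> (\<forall>i. bij (d i))"

definition bireversible :: "('s \<Rightarrow> 'q \<Rightarrow> 'q) \<Rightarrow> ('q \<Rightarrow> 's \<Rightarrow> 's) \<Rightarrow> bool" where
  "bireversible d r \<longleftrightarrow> invertible r \<and> reversible d \<and>
     (\<forall>j. bij (\<lambda>x. d (inv (r x) j) x))"

definition connected_aut :: "('s \<Rightarrow> 'q \<Rightarrow> 'q) \<Rightarrow> bool" where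
  "connected_aut d \<longleftrightarrow>
     (let E = {(x, d i x) | x i. True} in \<forall>x y. (x, y) \<in> (E \<union> E\<inverse>)\<^sup>*)"

fun dw :: "('s \<Rightarrow> 'q \<Rightarrow> 'q) \<Rightarrow> ('q \<Rightarrow> 's \<Rightarrow> 's) \<Rightarrow> 's \<Rightarrow> 'q list \<Rightarrow> 'q list" where
  "dw d r i [] = []"
| "dw d r i (x # u) = d i x # dw d r (r x i) u"

text \<open>Edges of the powers A^n (all n at once; dw preserves length).\<close>
definition pow_edges :: "('s \<Rightarrow> 'q \<Rightarrow> 'q) \<Rightarrow> ('q \<Rightarrow> 's \<Rightarrow> 's) \<Rightarrow> ('q list \<times> 'q list) set" where
  "pow_edges d r = {(u, dw d r i u) | u i. True}"

text \<open>Connected component of A^(length u) containing u (a vertex of the orbit tree).\<close>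
definition comp :: "('s \<Rightarrow> 'q \<Rightarrow> 'q) \<Rightarrow> ('q \<Rightarrow> 's \<Rightarrow> 's) \<Rightarrow> 'q list \<Rightarrow> 'q list set" where
  "comp d r u = {v. (u, v) \<in> (pow_edges d r \<union> (pow_edges d r)\<inverse>)\<^sup>*}"

definition root :: "('s \<Rightarrow> 'q \<Rightarrow> 'q) \<Rightarrow> ('q \<Rightarrow> 's \<Rightarrow> 's) \<Rightarrow> 'q list set" where
  "root d r = comp d r []"

definition tree_edges :: "('s \<Rightarrow> 'q \<Rightarrow> 'q) \<Rightarrow> ('q \<Rightarrow> 's \<Rightarrow> 's) \<Rightarrow> ('q list set \<times> 'q list set) set" where
  "tree_edges d r = {(comp d r u, comp d r (u @ [x])) | u x. True}"

definition label :: "'q list set \<times> 'q list set \<Rightarrow> real" where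
  "label e = real (card (snd e)) / real (card (fst e))"

definition liftable :: "'q list set \<times> 'q list set \<Rightarrow> 'q list set \<times> 'q list set \<Rightarrow> bool" where
  "liftable e f \<longleftrightarrow> (\<forall>w \<in> snd e. \<exists>s \<in> snd f. suffix s w)"

definition is_branch :: "('s \<Rightarrow> 'q \<Rightarrow> 'q) \<Rightarrow> ('q \<Rightarrow> 's \<Rightarrow> 's) \<Rightarrow> (nat \<Rightarrow> 'q list set) \<Rightarrow> bool" where
  "is_branch d r V \<longleftrightarrow> V 0 = root d r \<and> (\<forall>i. (V i, V (Suc i)) \<in> tree_edges d r)"

definition active_branch :: "(nat \<Rightarrow> 'q list set) \<Rightarrow> bool" where
  "active_branch V \<longleftrightarrow> \<not> (\<exists>N. \<forall>i\<ge>N. label (V i, V (Suc i)) = 1)"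

definition self_liftable_branch :: "(nat \<Rightarrow> 'q list set) \<Rightarrow> bool" where
  "self_liftable_branch V \<longleftrightarrow> (\<exists>k>0. \<forall>i j.
      liftable (V (i + k + j), V (Suc (i + k + j))) (V (i + j), V (Suc (i + j))))"

definition initial_path :: "('s \<Rightarrow> 'q \<Rightarrow> 'q) \<Rightarrow> ('q \<Rightarrow> 's \<Rightarrow> 's) \<Rightarrow> 'q list set list \<Rightarrow> nat \<Rightarrow> bool" where
  "initial_path d r vs n \<longleftrightarrow> length vs = Suc n \<and> vs ! 0 = root d r \<and>
     (\<forall>i<n. (vs ! i, vs ! Suc i) \<in> tree_edges d r)"

definition path_edges :: "'q list set list \<Rightarrow> ('q list set \<times> 'q list set) list" where
  "path_edges vs = map (\<lambda>i. (vs ! i, vs ! Suc i)) [0..<length vs - 1]"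

definition k_self_liftable_path :: "('q list set \<times> 'q list set) list \<Rightarrow> nat \<Rightarrow> bool" where
  "k_self_liftable_path es k \<longleftrightarrow> (\<forall>i m. i + k + m \<le> length es \<longrightarrow>
      list_all2 liftable (take m (drop (i + k) es)) (take m (drop i es)))"

definition legit_child :: "('s \<Rightarrow> 'q \<Rightarrow> 'q) \<Rightarrow> ('q \<Rightarrow> 's \<Rightarrow> 's) \<Rightarrow>
    'q list set \<times> 'q list set \<Rightarrow> 'q list set \<times> 'q list set \<Rightarrow> bool" where
  "legit_child d r e f \<longleftrightarrow> f \<in> tree_edges d r \<and> fst f = snd e \<and> liftable f e"

definition jungle_trunk :: "('s \<Rightarrow> 'q \<Rightarrow> 'q) \<Rightarrow> ('q \<Rightarrow> 's \<Rightarrow> 's) \<Rightarrow> 'q list set list \<Rightarrow> nat \<Rightarrow> bool" where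
  "jungle_trunk d r vs n \<longleftrightarrow> initial_path d r vs n \<and> 0 < n \<and>
     k_self_liftable_path (path_edges vs) 1 \<and>
     (let e = (vs ! (n - 1), vs ! n) in
        (\<exists>f g. f \<noteq> g \<and> legit_child d r e f \<and> legit_child d r e g) \<and>
        (\<forall>f. legit_child d r e f \<longrightarrow> label f = 1))"

definition jungle_edges :: "('s \<Rightarrow> 'q \<Rightarrow> 'q) \<Rightarrow> ('q \<Rightarrow> 's \<Rightarrow> 's) \<Rightarrow> 'q list set list \<Rightarrow>
    ('q list set \<times> 'q list set) set" where
  "jungle_edges d r vs = set (path_edges vs) \<union>
     {f \<in> tree_edges d r. (last vs, fst f) \<in> (tree_edges d r)\<^sup>* \<and>
                          liftable f (last (path_edges vs))}"

definition jungle_vertices :: "('s \<Rightarrow> 'q \<Rightarrow> 'q) \<Rightarrow> ('q \<Rightarrow> 's \<Rightarrow> 's) \<Rightarrow> 'q list set list \<Rightarrow> 'q list set set" where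
  "jungle_vertices d r vs = fst ` jungle_edges d r vs \<union> snd ` jungle_edges d r vs"

definition jword :: "('s \<Rightarrow> 'q \<Rightarrow> 'q) \<Rightarrow> ('q \<Rightarrow> 's \<Rightarrow> 's) \<Rightarrow> 'q list set list \<Rightarrow> 'q list \<Rightarrow> bool" where
  "jword d r vs s \<longleftrightarrow>
     (\<forall>k<length s. (comp d r (take k s), comp d r (take (Suc k) s)) \<in> jungle_edges d r vs)"

text \<open>Liana (finite-word part): S = prefixes of a stem w together with w L, L prefix-closed,
 all words j-words, and each vertex of the jungle tree represented by exactly one word.\<close>
definition liana :: "('s \<Rightarrow> 'q \<Rightarrow> 'q) \<Rightarrow> ('q \<Rightarrow> 's \<Rightarrow> 's) \<Rightarrow> 'q list set list \<Rightarrow> 'q list set \<Rightarrow> bool" where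
  "liana d r vs S \<longleftrightarrow> (\<exists>w L. w \<in> last vs \<and>
     (\<forall>l\<in>L. \<forall>p. prefix p l \<longrightarrow> p \<in> L) \<and>
     S = {p. prefix p w} \<union> (\<lambda>l. w @ l) ` L \<and>
     (\<forall>s\<in>S. jword d r vs s) \<and>
     (\<forall>V\<in>jungle_vertices d r vs. \<exists>!s. s \<in> S \<and> comp d r s = V))"

end

theory Submission
  imports Defs
begin

text \<open>Let \<open>K\<close> be the component of the stem \<open>w\<close> (the bottom of the trunk) and \<open>C\<close> that of
  \<open>butlast w\<close>. Reversibility makes the number of letters \<open>x\<close> with \<open>c @ [x] \<in> K\<close> the same for
  all \<open>c \<in> C\<close>, bireversibility does the same for \<open>y # c \<in> K\<close>, and the 1-self-liftability of the
  trunk puts \<open>tl a\<close> in \<open>C\<close> for every \<open>a \<in> K\<close>; counting \<open>K\<close> in both ways shows that the two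
  numbers agree. So the graph on \<open>K\<close> joining \<open>a\<close> to every one-letter shift \<open>b\<close> of \<open>a\<close> has equal
  in- and out-degrees everywhere, and its reachability relation is symmetric.
  Since the legitimate children of the last trunk edge have label 1, a word of the liana that is at
  least as long as the stem can be extended by a letter exactly when its new length-\<open>n\<close> window
  lies in \<open>K\<close>: beyond the stem the liana consists of walks in this graph. Hence from any
  \<open>t @ u @ v\<close> one can walk back to the stem by a path of length at least \<open>n\<close> and then replay
  the walk that led from the stem to \<open>t @ u\<close>.\<close>

fun rho_word :: "('q \<Rightarrow> 's \<Rightarrow> 's) \<Rightarrow> 's \<Rightarrow> 'q list \<Rightarrow> 's" where
  "rho_word r i [] = i"
| "rho_word r i (x # u) = rho_word r (r x i) u"

lemma length_dw [simp]: "length (dw d r i u) = length u"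
  by (induction u arbitrary: i) auto

lemma dw_append: "dw d r i (u @ v) = dw d r i u @ dw d r (rho_word r i u) v"
  by (induction u arbitrary: i) auto

lemma take_dw: "take k (dw d r i u) = dw d r i (take k u)"
  by (induction u arbitrary: i k) (auto simp: take_Cons')

lemma drop_dw: "drop k (dw d r i u) = dw d r (rho_word r i (take k u)) (drop k u)"
  using dw_append[of d r i "take k u" "drop k u"] by (simp add: min_def)

lemma comp_sym:
  assumes "v \<in> comp d r u"
  shows "u \<in> comp d r v"
proof -
  have "sym ((pow_edges d r \<union> (pow_edges d r)\<inverse>)\<^sup>*)"
    by (rule sym_rtrancl) (auto simp: sym_def)
  then show ?thesis
    using assms by (auto simp: comp_def dest: symD)
qed

lemma self_in_comp [simp]: "u \<in> comp d r u"
  by (simp add: comp_def)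

lemma comp_eqI: "v \<in> comp d r u \<Longrightarrow> comp d r v = comp d r u"
proof -
  assume "v \<in> comp d r u"
  then have "(u, v) \<in> (pow_edges d r \<union> (pow_edges d r)\<inverse>)\<^sup>*"
    and "(v, u) \<in> (pow_edges d r \<union> (pow_edges d r)\<inverse>)\<^sup>*"
    using comp_sym by (auto simp: comp_def)
  then show ?thesis
    unfolding comp_def by (blast intro: rtrancl_trans)
qed

lemma dw_mem_comp_iff [simp]: "dw d r i v \<in> comp d r u \<longleftrightarrow> v \<in> comp d r u"
proof -
  have "(v, dw d r i v) \<in> pow_edges d r" by (auto simp: pow_edges_def)
  then have "dw d r i v \<in> comp d r v" and "v \<in> comp d r (dw d r i v)"
    by (auto simp: comp_def)
  then show ?thesis by (metis comp_eqI)
qed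

lemma comp_dw [simp]: "comp d r (dw d r i v) = comp d r v"
  by (rule comp_eqI) simp

lemma comp_invariant:
  assumes "\<And>a i. f (dw d r i a) = f a" and "v \<in> comp d r u"
  shows "f v = f u"
proof -
  have "(u, v) \<in> (pow_edges d r \<union> (pow_edges d r)\<inverse>)\<^sup>*"
    using assms(2) by (simp add: comp_def)
  then show ?thesis
    by (induction rule: rtrancl_induct) (auto simp: pow_edges_def assms(1))
qed

lemma length_mem_comp: "v \<in> comp d r u \<Longrightarrow> length v = length u"
  by (rule comp_invariant) simp

lemma take_mem_comp: "v \<in> comp d r u \<Longrightarrow> take k v \<in> comp d r (take k u)"
proof -
  assume "v \<in> comp d r u"
  moreover have "comp d r (take k (dw d r i a)) = comp d r (take k a)" for i a
    by (simp add: take_dw)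
  ultimately have "comp d r (take k v) = comp d r (take k u)"
    by (rule comp_invariant[rotated])
  then show ?thesis by (metis self_in_comp)
qed

lemma drop_mem_comp: "v \<in> comp d r u \<Longrightarrow> drop k v \<in> comp d r (drop k u)"
proof -
  assume "v \<in> comp d r u"
  moreover have "comp d r (drop k (dw d r i a)) = comp d r (drop k a)" for i a
    by (simp add: drop_dw)
  ultimately have "comp d r (drop k v) = comp d r (drop k u)"
    by (rule comp_invariant[rotated])
  then show ?thesis by (metis self_in_comp)
qed

lemma card_right_ext_dw:
  assumes "reversible d"
  shows "card {x. dw d r i c @ [x] \<in> comp d r u} = card {x. c @ [x] \<in> comp d r u}"
proof -
  let ?f = "d (rho_word r i c)" and ?B = "{x. dw d r i c @ [x] \<in> comp d r u}"
  have "bij ?f" using assms by (simp add: reversible_def)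
  then have "card (?f -` ?B) = card ?B"
    by (intro card_vimage_inj) (auto simp: bij_is_inj bij_is_surj)
  moreover have "{x. c @ [x] \<in> comp d r u} = ?f -` ?B"
    using dw_mem_comp_iff[of d r i "c @ [_]" u] by (auto simp: dw_append)
  ultimately show ?thesis by simp
qed

lemma card_left_ext_dw:
  assumes "bireversible d r"
  shows "card {y. y # dw d r i c \<in> comp d r u} = card {y. y # c \<in> comp d r u}"
proof -
  let ?f = "\<lambda>y. d (inv (r y) i) y" and ?B = "{y. y # dw d r i c \<in> comp d r u}"
  have "bij ?f" using assms by (simp add: bireversible_def)
  then have "card (?f -` ?B) = card ?B"
    by (intro card_vimage_inj) (auto simp: bij_is_inj bij_is_surj)
  moreover have "dw d r (inv (r y) i) (y # c) = ?f y # dw d r i c" for y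
    using assms by (simp add: bireversible_def invertible_def bij_is_surj surj_f_inv_f)
  then have "y # c \<in> comp d r u \<longleftrightarrow> ?f y # dw d r i c \<in> comp d r u" for y
    using dw_mem_comp_iff[of d r "inv (r y) i" "y # c" u] by simp
  then have "{y. y # c \<in> comp d r u} = ?f -` ?B" by auto
  ultimately show ?thesis by simp
qed

lemma card_right_ext_comp:
  "reversible d \<Longrightarrow> c' \<in> comp d r c \<Longrightarrow>
    card {x. c' @ [x] \<in> comp d r u} = card {x. c @ [x] \<in> comp d r u}"
  by (rule comp_invariant) (rule card_right_ext_dw)

lemma card_left_ext_comp:
  "bireversible d r \<Longrightarrow> c' \<in> comp d r c \<Longrightarrow>
    card {y. y # c' \<in> comp d r u} = card {y. y # c \<in> comp d r u}"
  by (rule comp_invariant) (rule card_left_ext_dw)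

lemma card_eq_card_mult_fibre:
  fixes g :: "'c \<Rightarrow> 'x::finite \<Rightarrow> 'd"
  assumes "finite P"
    and split: "\<And>e. e \<in> D \<Longrightarrow> \<exists>c x. c \<in> P \<and> e = g c x"
    and inj: "\<And>c x c' x'. g c x = g c' x' \<Longrightarrow> c = c' \<and> x = x'"
    and fibre: "\<And>c. c \<in> P \<Longrightarrow> card {x. g c x \<in> D} = k"
  shows "card D = card P * k"
proof -
  have "inj_on (\<lambda>(c, x). g c x) (SIGMA c:P. {x. g c x \<in> D})"
    using inj by (auto simp: inj_on_def)
  then have "card ((\<lambda>(c, x). g c x) ` (SIGMA c:P. {x. g c x \<in> D})) =
      card (SIGMA c:P. {x. g c x \<in> D})"
    by (rule card_image)
  moreover have "(\<lambda>(c, x). g c x) ` (SIGMA c:P. {x. g c x \<in> D}) = D"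
    using split by fastforce
  ultimately have "card D = card (SIGMA c:P. {x. g c x \<in> D})"
    by simp
  also have "\<dots> = card P * k"
    using \<open>finite P\<close> fibre by simp
  finally show ?thesis .
qed

lemma converse_closed_if_balanced:
  assumes "finite G" "finite R"
    and bal: "\<And>a. card (G `` {a}) = card (G\<inverse> `` {a})"
    and closed: "G `` R \<subseteq> R"
  shows "G\<inverse> `` R \<subseteq> R"
proof -
  have fin_img: "finite (G `` {a})" "finite (G\<inverse> `` {a})" for a
    using \<open>finite G\<close> by (auto intro: finite_subset[of _ "snd ` G"] finite_subset[of _ "fst ` G"])
  have "card (G \<inter> R \<times> UNIV) = (\<Sum>a\<in>R. card (G `` {a}))"
  proof -
    have "G \<inter> R \<times> UNIV = (SIGMA a:R. G `` {a})" by auto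
    then show ?thesis using \<open>finite R\<close> fin_img by simp
  qed
  also have "\<dots> = (\<Sum>a\<in>R. card (G\<inverse> `` {a}))"
    using bal by simp
  also have "\<dots> = card (G \<inter> UNIV \<times> R)"
  proof -
    have "G \<inter> UNIV \<times> R = prod.swap ` (SIGMA a:R. G\<inverse> `` {a})" by force
    then show ?thesis using \<open>finite R\<close> fin_img by (simp add: card_image)
  qed
  finally have "G \<inter> R \<times> UNIV = G \<inter> UNIV \<times> R"
    using closed \<open>finite G\<close> by (intro card_subset_eq) auto
  then show ?thesis by blast
qed

lemma rtrancl_sym_if_balanced:
  assumes "finite G" and bal: "\<And>a. card (G `` {a}) = card (G\<inverse> `` {a})"
    and "(a, b) \<in> G\<^sup>*"
  shows "(b, a) \<in> G\<^sup>*"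
proof -
  let ?R = "G\<^sup>* `` {b}"
  have "?R \<subseteq> insert b (Range G)"
    by (auto elim: rtranclE)
  then have "finite ?R" using \<open>finite G\<close> by (simp add: finite_subset finite_Range)
  moreover have "G `` ?R \<subseteq> ?R" by (auto intro: rtrancl_into_rtrancl)
  ultimately have backward: "G\<inverse> `` ?R \<subseteq> ?R"
    using converse_closed_if_balanced[OF \<open>finite G\<close> _ bal] by blast
  from \<open>(a, b) \<in> G\<^sup>*\<close> have "a \<in> ?R"
    by (induction rule: converse_rtrancl_induct) (use backward in auto)
  then show ?thesis by simp
qed

lemma k_self_liftable_path_nth:
  assumes "k_self_liftable_path es k" and "i + k < length es"
  shows "liftable (es ! (i + k)) (es ! i)"
proof -
  have "list_all2 liftable (take 1 (drop (i + k) es)) (take 1 (drop i es))"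
    using assms unfolding k_self_liftable_path_def by simp
  moreover have "take 1 (drop j es) = [es ! j]" if "j < length es" for j
    using that by (simp add: Cons_nth_drop_Suc[symmetric])
  ultimately show ?thesis using assms(2) by simp
qed

lemma suffix_eq_drop: "suffix p s \<Longrightarrow> p = drop (length s - length p) s"
  by (auto simp: suffix_def)

lemma tree_edges_rtrancl_append: "(comp d r u, comp d r (u @ v)) \<in> (tree_edges d r)\<^sup>*"
proof (induction v rule: rev_induct)
  case (snoc x v)
  have "(comp d r (u @ v), comp d r (u @ v @ [x])) \<in> tree_edges d r"
    unfolding tree_edges_def by (metis (mono_tags, lifting) append_assoc mem_Collect_eq)
  with snoc show ?case by (simp add: rtrancl_into_rtrancl)
qed simp

locale jungle_liana =
  fixes d :: "'s::finite \<Rightarrow> 'q::finite \<Rightarrow> 'q" and r :: "'q \<Rightarrow> 's \<Rightarrow> 's"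
    and vs :: "'q list set list" and n :: nat and S :: "'q list set"
    and w :: "'q list" and L :: "'q list set"
  assumes bireversible: "bireversible d r"
    and trunk: "jungle_trunk d r vs n"
    and stem: "w \<in> last vs"
    and L_prefix_closed: "\<forall>l\<in>L. \<forall>p. prefix p l \<longrightarrow> p \<in> L"
    and S_eq: "S = {p. prefix p w} \<union> (\<lambda>l. w @ l) ` L"
    and jwords: "\<forall>s\<in>S. jword d r vs s"
    and unique_rep: "\<forall>V\<in>jungle_vertices d r vs. \<exists>!s. s \<in> S \<and> comp d r s = V"
begin

lemma initial_path: "initial_path d r vs n" and n_pos: "0 < n"
  and self_liftable: "k_self_liftable_path (path_edges vs) 1"
  using trunk by (auto simp: jungle_trunk_def)

lemma reversible: "reversible d"
  using bireversible by (simp add: bireversible_def)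

lemma length_vs: "length vs = Suc n"
  using initial_path by (simp add: initial_path_def)

lemma vs_nth_eq_comp: "i \<le> n \<Longrightarrow> \<exists>u. length u = i \<and> vs ! i = comp d r u"
proof (induction i)
  case 0
  then show ?case using initial_path by (auto simp: initial_path_def root_def)
next
  case (Suc i)
  then obtain u0 where u0: "length u0 = i" "vs ! i = comp d r u0" by auto
  have "(vs ! i, vs ! Suc i) \<in> tree_edges d r"
    using initial_path Suc(2) by (simp add: initial_path_def)
  then obtain u x where "vs ! i = comp d r u" "vs ! Suc i = comp d r (u @ [x])"
    by (auto simp: tree_edges_def)
  moreover from this u0 have "length u = i" by (metis self_in_comp length_mem_comp)
  ultimately show ?case by (intro exI[of _ "u @ [x]"]) simp
qed

lemma length_mem_vs: "i \<le> n \<Longrightarrow> v \<in> vs ! i \<Longrightarrow> length v = i"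
  using vs_nth_eq_comp length_mem_comp by metis

definition K :: "'q list set" where "K = comp d r w"

definition C :: "'q list set" where "C = comp d r (butlast w)"

lemma last_vs_eq_nth: "last vs = vs ! n"
proof -
  have "vs \<noteq> []" using length_vs by auto
  then show ?thesis using length_vs by (simp add: last_conv_nth)
qed

lemma vs_last: "vs ! n = K"
  using vs_nth_eq_comp[of n] stem last_vs_eq_nth by (auto simp: K_def comp_eqI)

lemma last_vs: "last vs = K"
  using last_vs_eq_nth vs_last by simp

lemma length_stem: "length w = n"
  using stem last_vs length_mem_vs vs_last by auto

lemma stem_in_K: "w \<in> K"
  by (simp add: K_def)

lemma length_mem_K: "a \<in> K \<Longrightarrow> length a = n"
  using K_def length_mem_comp length_stem by auto

lemma comp_mem_K: "a \<in> K \<Longrightarrow> comp d r a = K"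
  by (simp add: K_def comp_eqI)

lemma finite_K: "finite K"
  by (rule finite_subset[OF _ finite_lists_length_eq[of UNIV n]]) (auto simp: length_mem_K)

lemma vs_pen: "vs ! (n - 1) = C"
proof -
  have "n - 1 < n" using n_pos by simp
  then have "(vs ! (n - 1), vs ! Suc (n - 1)) \<in> tree_edges d r"
    using initial_path unfolding initial_path_def by blast
  then obtain u x where ux: "vs ! (n - 1) = comp d r u" "K = comp d r (u @ [x])"
    using n_pos vs_last by (auto simp: tree_edges_def)
  then have "length u = n - 1" using length_mem_vs[of "n - 1" u] by simp
  moreover have "take (n - 1) w \<in> comp d r (take (n - 1) (u @ [x]))"
    using ux(2) stem_in_K by (metis take_mem_comp)
  ultimately show ?thesis
    using ux(1) length_stem by (simp add: C_def butlast_conv_take comp_eqI)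
qed

lemma finite_C: "finite C"
  by (rule finite_subset[OF _ finite_lists_length_eq[of UNIV "n - 1"]])
     (auto simp: C_def length_mem_comp length_stem)

lemma butlast_mem_C: "a \<in> K \<Longrightarrow> butlast a \<in> C"
  using take_mem_comp[of a d r w "n - 1"] length_mem_K length_stem
  by (simp add: K_def C_def butlast_conv_take)

lemma path_edges_nth: "j < n \<Longrightarrow> path_edges vs ! j = (vs ! j, vs ! Suc j)"
  using length_vs by (simp add: path_edges_def)

lemma length_path_edges: "length (path_edges vs) = n"
  using length_vs by (simp add: path_edges_def)

lemma last_path_edges: "last (path_edges vs) = (C, K)"
  using length_path_edges path_edges_nth[of "n - 1"] n_pos vs_pen vs_last
  by (auto simp: last_conv_nth)

text \<open>The one place where the trunk's 1-self-liftability is used.\<close>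
lemma tl_mem_C:
  assumes "a \<in> K"
  shows "tl a \<in> C"
proof (cases "n = 1")
  case True
  then have "length (tl a) = 0" "length (butlast w) = 0"
    using assms length_mem_K length_stem by simp_all
  then have "tl a = butlast w" by (simp only: length_0_conv)
  then show ?thesis by (simp add: C_def)
next
  case False
  have "liftable (path_edges vs ! (n - 2 + 1)) (path_edges vs ! (n - 2))"
    using False n_pos length_path_edges by (intro k_self_liftable_path_nth[OF self_liftable]) auto
  moreover have "path_edges vs ! (n - 2 + 1) = (C, K)"
    using False n_pos path_edges_nth[of "n - 1"] vs_pen vs_last
    by (simp add: Suc_diff_Suc numeral_2_eq_2)
  moreover have "path_edges vs ! (n - 2) = (vs ! (n - 2), C)"
    using False n_pos path_edges_nth[of "n - 2"] vs_pen
    by (simp add: Suc_diff_Suc numeral_2_eq_2)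
  ultimately have "liftable (C, K) (vs ! (n - 2), C)" by simp
  then obtain p where "p \<in> C" "suffix p a"
    using \<open>a \<in> K\<close> by (auto simp: liftable_def)
  moreover have "length p = n - 1"
    using length_mem_comp[of p d r "butlast w"] \<open>p \<in> C\<close> length_stem by (simp add: C_def)
  ultimately show ?thesis
    using \<open>a \<in> K\<close> length_mem_K by (metis suffix_eq_drop One_nat_def drop_Suc drop_0 diff_diff_cancel n_pos Suc_leI)
qed

definition right_degree :: nat where
  "right_degree = card {x. butlast w @ [x] \<in> K}"

definition left_degree :: nat where
  "left_degree = card {y. y # butlast w \<in> K}"

lemma card_right_ext_K: "c \<in> C \<Longrightarrow> card {x. c @ [x] \<in> K} = right_degree"
  unfolding right_degree_def K_def C_def using card_right_ext_comp[OF reversible] .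

lemma card_left_ext_K: "c \<in> C \<Longrightarrow> card {y. y # c \<in> K} = left_degree"
  unfolding left_degree_def K_def C_def using card_left_ext_comp[OF bireversible] .

lemma K_nonempty_words: "a \<in> K \<Longrightarrow> a \<noteq> []"
  using length_mem_K n_pos by auto

lemma card_K_right: "card K = card C * right_degree"
proof (rule card_eq_card_mult_fibre[OF finite_C])
  show "\<exists>c x. c \<in> C \<and> a = c @ [x]" if "a \<in> K" for a
    using that butlast_mem_C K_nonempty_words by (metis append_butlast_last_id)
qed (auto simp: card_right_ext_K)

lemma card_K_left: "card K = card C * left_degree"
proof (rule card_eq_card_mult_fibre[OF finite_C])
  show "\<exists>c y. c \<in> C \<and> a = y # c" if "a \<in> K" for a
    using that tl_mem_C K_nonempty_words by (metis list.collapse)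
qed (auto simp: card_left_ext_K)

lemma left_degree_eq_right_degree: "left_degree = right_degree"
proof -
  have "butlast w \<in> C" by (simp add: C_def)
  then have "card C > 0" using finite_C card_gt_0_iff by blast
  then show ?thesis using card_K_left card_K_right by simp
qed

lemma right_degree_pos: "right_degree > 0"
proof -
  have "card K > 0" using finite_K stem_in_K card_gt_0_iff by blast
  then show ?thesis using card_K_right by simp
qed

definition shift_graph :: "('q list \<times> 'q list) set" where
  "shift_graph = {(a, b). a \<in> K \<and> b \<in> K \<and> tl a = butlast b}"

lemma finite_shift_graph: "finite shift_graph"
  by (rule finite_subset[of _ "K \<times> K"]) (auto simp: shift_graph_def finite_K)

lemma card_shift_graph_out: "a \<in> K \<Longrightarrow> card (shift_graph `` {a}) = right_degree"
proof -
  assume "a \<in> K"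
  have "shift_graph `` {a} = (\<lambda>x. tl a @ [x]) ` {x. tl a @ [x] \<in> K}"
    using \<open>a \<in> K\<close> K_nonempty_words
    by (auto simp: shift_graph_def image_iff) (metis append_butlast_last_id)
  then show ?thesis
    using card_right_ext_K[OF tl_mem_C[OF \<open>a \<in> K\<close>]] by (simp add: card_image inj_on_def)
qed

lemma card_shift_graph_in: "b \<in> K \<Longrightarrow> card (shift_graph\<inverse> `` {b}) = right_degree"
proof -
  assume "b \<in> K"
  have "shift_graph\<inverse> `` {b} = (\<lambda>y. y # butlast b) ` {y. y # butlast b \<in> K}"
    using \<open>b \<in> K\<close> K_nonempty_words
    by (auto simp: shift_graph_def image_iff) (metis list.collapse)
  then show ?thesis
    using card_left_ext_K[OF butlast_mem_C[OF \<open>b \<in> K\<close>]] left_degree_eq_right_degree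
    by (simp add: card_image inj_on_def)
qed

lemma shift_graph_rtrancl_sym: "(a, b) \<in> shift_graph\<^sup>* \<Longrightarrow> (b, a) \<in> shift_graph\<^sup>*"
proof (rule rtrancl_sym_if_balanced[OF finite_shift_graph])
  show "card (shift_graph `` {a}) = card (shift_graph\<inverse> `` {a})" for a
  proof (cases "a \<in> K")
    case False
    then have "shift_graph `` {a} = {}" "shift_graph\<inverse> `` {a} = {}"
      by (auto simp: shift_graph_def)
    then show ?thesis by simp
  qed (simp add: card_shift_graph_out card_shift_graph_in)
qed

lemma prefix_mem_S: "s \<in> S \<Longrightarrow> prefix p s \<Longrightarrow> p \<in> S"
  using L_prefix_closed unfolding S_eq
  by (auto simp: prefix_append dest: prefix_order.trans)

lemma stem_in_S: "w \<in> S"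
  by (simp add: S_eq)

lemma mem_S_long: "s \<in> S \<Longrightarrow> n \<le> length s \<Longrightarrow> prefix w s"
  unfolding S_eq using length_stem by (auto simp: prefix_def)

lemma mem_S_short: "s \<in> S \<Longrightarrow> length s \<le> n \<Longrightarrow> prefix s w"
  unfolding S_eq using length_stem by auto

definition window :: "'q list \<Rightarrow> 'q list" where
  "window s = drop (length s - n) s"

lemma window_snoc: "n \<le> length s \<Longrightarrow> window (s @ [x]) = tl (window s) @ [x]"
  using n_pos by (simp add: window_def Suc_diff_le drop_Suc tl_drop drop_append)

lemma window_append_stem: "window (s @ w) = w"
  by (simp add: window_def length_stem)

lemma window_mem_comp: "b \<in> comp d r a \<Longrightarrow> window b \<in> comp d r (window a)"
  unfolding window_def using drop_mem_comp length_mem_comp by metis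

lemma window_mem_K:
  assumes "s \<in> S" and "n \<le> length s"
  shows "window s \<in> K"
proof (cases "length s = n")
  case True
  then have "s = w" using mem_S_long[OF assms] length_stem by (auto simp: prefix_def)
  then show ?thesis by (simp add: window_def length_stem stem_in_K)
next
  case False
  let ?e = "(comp d r (butlast s), comp d r s)"
  have "length s - 1 < length s" and "take (Suc (length s - 1)) s = s"
    using assms n_pos by auto
  then have "?e \<in> jungle_edges d r vs"
    using jwords assms(1) unfolding jword_def by (metis butlast_conv_take)
  moreover have "?e \<notin> set (path_edges vs)"
  proof
    assume "?e \<in> set (path_edges vs)"
    then obtain j where "j < n" "comp d r s = vs ! Suc j"
      using length_path_edges path_edges_nth by (metis in_set_conv_nth prod.inject)
    then show False
      using False assms(2) length_mem_vs[of "Suc j" s] self_in_comp[of s d r] by simp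
  qed
  ultimately have "liftable ?e (C, K)"
    by (simp add: jungle_edges_def last_path_edges)
  then obtain p where "p \<in> K" "suffix p s"
    using self_in_comp[of s d r] unfolding liftable_def snd_conv by blast
  then show ?thesis
    by (metis suffix_eq_drop length_mem_K window_def)
qed

lemma card_comp_snoc_eq_card_K:
  assumes "a \<in> K" and "tl a @ [x] \<in> K"
  shows "card (comp d r (a @ [x])) = card K"
proof -
  let ?D = "comp d r (a @ [x])"
  have "(K, ?D) \<in> tree_edges d r"
    using comp_mem_K[OF \<open>a \<in> K\<close>] unfolding tree_edges_def by blast
  moreover have "liftable (K, ?D) (vs ! (n - 1), vs ! n)"
    unfolding liftable_def vs_last
  proof
    fix v assume "v \<in> snd (K, ?D)"
    moreover have "drop 1 (a @ [x]) = tl a @ [x]"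
      using K_nonempty_words[OF \<open>a \<in> K\<close>] by (cases a) auto
    ultimately have "drop 1 v \<in> comp d r (tl a @ [x])"
      using drop_mem_comp[of v d r "a @ [x]" 1] by simp
    then show "\<exists>p\<in>snd (vs ! (n - 1), K). suffix p v"
      using comp_mem_K[OF assms(2)] suffix_drop by auto
  qed
  ultimately have "legit_child d r (vs ! (n - 1), vs ! n) (K, ?D)"
    by (simp add: legit_child_def vs_last)
  then have "label (K, ?D) = 1"
    using trunk by (simp add: jungle_trunk_def Let_def)
  moreover have "card K > 0"
    using finite_K \<open>a \<in> K\<close> card_gt_0_iff by blast
  ultimately show ?thesis
    by (simp add: label_def)
qed

lemma snoc_mem_comp_snoc_imp_eq:
  assumes "a \<in> K" and "tl a @ [x] \<in> K" and "a @ [y] \<in> comp d r (a @ [x])"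
  shows "y = x"
proof -
  let ?D = "comp d r (a @ [x])"
  have "card ?D = card K * card {z. a @ [z] \<in> ?D}"
  proof (rule card_eq_card_mult_fibre[OF finite_K])
    show "\<exists>c z. c \<in> K \<and> e = c @ [z]" if "e \<in> ?D" for e
    proof -
      have "length e = Suc n"
        using length_mem_comp[OF that] length_mem_K[OF \<open>a \<in> K\<close>] by simp
      moreover from this have "butlast e \<in> comp d r a"
        using take_mem_comp[OF that, of n] length_mem_K[OF \<open>a \<in> K\<close>]
        by (simp add: butlast_conv_take)
      ultimately show ?thesis
        using comp_mem_K[OF \<open>a \<in> K\<close>] by (metis append_butlast_last_id list.size(3) nat.simps(3))
    qed
    show "card {z. c @ [z] \<in> ?D} = card {z. a @ [z] \<in> ?D}" if "c \<in> K" for c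
      using that comp_mem_K[OF \<open>a \<in> K\<close>] card_right_ext_comp[OF reversible] by blast
  qed simp
  moreover have "card K > 0"
    using finite_K \<open>a \<in> K\<close> card_gt_0_iff by blast
  ultimately have "card {z. a @ [z] \<in> ?D} = 1"
    using card_comp_snoc_eq_card_K[OF assms(1,2)] by simp
  then obtain b where "{z. a @ [z] \<in> ?D} = {b}"
    by (rule card_1_singletonE)
  moreover have "x \<in> {z. a @ [z] \<in> ?D}" and "y \<in> {z. a @ [z] \<in> ?D}"
    using assms(3) by simp_all
  ultimately show ?thesis by (metis singletonD)
qed

lemma snoc_jungle_edge:
  assumes "s \<in> S" and "n \<le> length s" and "window (s @ [x]) \<in> K"
  shows "(comp d r s, comp d r (s @ [x])) \<in> jungle_edges d r vs"
proof -
  have "(comp d r s, comp d r (s @ [x])) \<in> tree_edges d r"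
    by (auto simp: tree_edges_def)
  moreover have "(last vs, comp d r s) \<in> (tree_edges d r)\<^sup>*"
    using mem_S_long[OF assms(1,2)] tree_edges_rtrancl_append[of d r w]
    by (auto simp: last_vs K_def prefix_def)
  moreover have "liftable (comp d r s, comp d r (s @ [x])) (C, K)"
    unfolding liftable_def
  proof
    fix v assume "v \<in> snd (comp d r s, comp d r (s @ [x]))"
    then have "window v \<in> K"
      using window_mem_comp comp_mem_K[OF assms(3)] by fastforce
    then show "\<exists>p\<in>snd (C, K). suffix p v"
      unfolding window_def snd_conv using suffix_drop by blast
  qed
  ultimately show ?thesis
    by (simp add: jungle_edges_def last_path_edges)
qed

lemma snoc_mem_S:
  assumes "s \<in> S" and "n \<le> length s" and "window (s @ [x]) \<in> K"
  shows "s @ [x] \<in> S"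
proof -
  have edge: "(comp d r s, comp d r (s @ [x])) \<in> jungle_edges d r vs"
    using snoc_jungle_edge[OF assms] .
  then have "comp d r (s @ [x]) \<in> jungle_vertices d r vs"
    by (force simp: jungle_vertices_def)
  then obtain s' where "s' \<in> S" and s': "s' \<in> comp d r (s @ [x])"
    using unique_rep by (metis self_in_comp)
  then have "length s' = Suc (length s)"
    using length_mem_comp by fastforce
  then obtain y where s'_eq: "s' = take (length s) s' @ [y]"
    by (metis append_butlast_last_id butlast_conv_take diff_Suc_1 length_0_conv nat.distinct(1))
  have "take (length s) s' = s"
  proof -
    have "comp d r s \<in> jungle_vertices d r vs"
      using edge by (force simp: jungle_vertices_def)
    moreover have "take (length s) s' \<in> S"
      using prefix_mem_S[OF \<open>s' \<in> S\<close>] take_is_prefix by blast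
    moreover have "comp d r (take (length s) s') = comp d r s"
      using take_mem_comp[OF s', of "length s"] by (simp add: comp_eqI)
    ultimately show ?thesis
      using unique_rep assms(1) by blast
  qed
  with s'_eq s' have "s @ [y] \<in> comp d r (s @ [x])" by simp
  then have "window s @ [y] \<in> comp d r (window s @ [x])"
    using drop_mem_comp[of "s @ [y]" d r "s @ [x]" "length s - n"] assms(2)
    by (simp add: window_def)
  moreover have "tl (window s) @ [x] \<in> K"
    using assms(2,3) by (simp add: window_snoc)
  ultimately have "y = x"
    using snoc_mem_comp_snoc_imp_eq window_mem_K[OF assms(1,2)] by blast
  then show ?thesis
    using \<open>s' \<in> S\<close> s'_eq \<open>take (length s) s' = s\<close> by simp
qed

lemma window_suffix: "suffix t u \<Longrightarrow> n \<le> length t \<Longrightarrow> window t = window u"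
  by (auto simp: window_def suffix_def)

lemma window_append: "n \<le> length s \<Longrightarrow> window (s @ q) = window (window s @ q)"
proof (rule window_suffix[symmetric])
  show "suffix (window s @ q) (s @ q)"
    unfolding window_def suffix_def by (metis append_assoc append_take_drop_id)
qed (simp add: window_def)

lemma window_shift_rtrancl:
  "s @ m \<in> S \<Longrightarrow> n \<le> length s \<Longrightarrow> (window s, window (s @ m)) \<in> shift_graph\<^sup>*"
proof (induction m rule: rev_induct)
  case (snoc x m)
  then have "s @ m \<in> S" by (metis prefix_mem_S append_assoc prefixI)
  then have "(window (s @ m), window (s @ m @ [x])) \<in> shift_graph"
    using snoc.prems window_mem_K[OF snoc.prems(1)] window_mem_K[OF \<open>s @ m \<in> S\<close>]
      window_snoc[of "s @ m" x]
    by (auto simp: shift_graph_def K_nonempty_words)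
  with snoc.IH \<open>s @ m \<in> S\<close> snoc.prems(2) show ?case
    by (simp add: rtrancl_into_rtrancl)
qed simp

lemma stem_reaches_window: "s \<in> S \<Longrightarrow> n \<le> length s \<Longrightarrow> (w, window s) \<in> shift_graph\<^sup>*"
  using mem_S_long window_shift_rtrancl[of w] window_append_stem[of "[]"] length_stem
  by (metis prefix_def self_append_conv2 order_refl)

lemma shift_edge_mem_S:
  assumes "s \<in> S" and "n \<le> length s" and "(window s, b) \<in> shift_graph"
  shows "s @ [last b] \<in> S" and "window (s @ [last b]) = b"
proof -
  show "window (s @ [last b]) = b"
    using assms(2,3) window_snoc K_nonempty_words by (auto simp: shift_graph_def)
  then show "s @ [last b] \<in> S"
    using snoc_mem_S[OF assms(1,2)] assms(3) by (auto simp: shift_graph_def)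
qed

lemma walk_mem_S:
  assumes "(window s, b) \<in> shift_graph\<^sup>*" and "s \<in> S" and "n \<le> length s"
  shows "\<exists>m. s @ m \<in> S \<and> window (s @ m) = b"
  using assms(1)
proof (induction rule: rtrancl_induct)
  case base
  then show ?case using assms(2) by (intro exI[of _ "[]"]) simp
next
  case (step b b')
  then obtain m where "s @ m \<in> S" "window (s @ m) = b" by blast
  then have "(s @ m) @ [last b'] \<in> S \<and> window ((s @ m) @ [last b']) = b'"
    using shift_edge_mem_S[of "s @ m" b'] step.hyps(2) assms(3) by simp
  then show ?case by (intro exI[of _ "m @ [last b']"]) simp
qed

lemma extension_mem_S: "s \<in> S \<Longrightarrow> n \<le> length s \<Longrightarrow> \<exists>m. length m = k \<and> s @ m \<in> S"
proof (induction k)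
  case (Suc k)
  then obtain m where m: "length m = k" "s @ m \<in> S" by blast
  have "shift_graph `` {window (s @ m)} \<noteq> {}"
    using card_shift_graph_out[OF window_mem_K[OF m(2)]] right_degree_pos Suc.prems(2)
    by fastforce
  then obtain b where "(window (s @ m), b) \<in> shift_graph" by blast
  then have "(s @ m) @ [last b] \<in> S"
    using shift_edge_mem_S(1)[OF m(2)] Suc.prems(2) by simp
  then show ?case using m(1) by (intro exI[of _ "m @ [last b]"]) simp
qed (auto intro: exI[of _ "[]"])

lemma replay_mem_S:
  "w @ l \<in> S \<Longrightarrow> s \<in> S \<Longrightarrow> n \<le> length s \<Longrightarrow> window s = w \<Longrightarrow> s @ l \<in> S"
proof (induction l rule: rev_induct)
  case (snoc x l)
  then have "s @ l \<in> S" by (metis prefix_mem_S append_assoc prefixI)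
  moreover have "window ((s @ l) @ [x]) = window (w @ l @ [x])"
    using window_append[OF snoc.prems(3)] snoc.prems(4) by simp
  then have "window ((s @ l) @ [x]) \<in> K"
    using window_mem_K[OF snoc.prems(1)] length_stem by simp
  ultimately show ?case
    using snoc_mem_S snoc.prems(3) by fastforce
qed simp

lemma return_to_self_mem_S:
  assumes "z \<in> S" and "n \<le> length z"
  shows "\<exists>p. z @ p @ z \<in> S"
proof -
  obtain l where l: "z = w @ l"
    using mem_S_long[OF assms] by (auto simp: prefix_def)
  obtain m1 where m1: "length m1 = n" "z @ m1 \<in> S"
    using extension_mem_S[OF assms] by blast
  have "(window (z @ m1), w) \<in> shift_graph\<^sup>*"
    using stem_reaches_window m1(2) assms(2) shift_graph_rtrancl_sym by simp
  then obtain m2 where m2: "z @ m1 @ m2 \<in> S" "window (z @ m1 @ m2) = w"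
    using walk_mem_S[of "z @ m1" w] m1(2) assms(2) by auto
  define p where "p = take (length (m1 @ m2) - n) (m1 @ m2)"
  have "window (m1 @ m2) = w"
    using window_suffix[of "m1 @ m2" "z @ m1 @ m2"] m1(1) m2(2) by (simp add: suffix_def)
  then have "z @ m1 @ m2 = z @ p @ w"
    unfolding p_def window_def by (metis append_take_drop_id)
  moreover have "(z @ m1 @ m2) @ l \<in> S"
    using replay_mem_S[of l "z @ m1 @ m2"] assms l m2 by simp
  ultimately show ?thesis using l by auto
qed

lemma recurrence:
  assumes "t @ u @ v \<in> S"
  shows "\<exists>x. t @ u @ v @ x @ u \<in> S"
proof -
  obtain y where "t @ u @ v @ y \<in> S" and "n \<le> length (t @ u @ v @ y)"
  proof (cases "n \<le> length (t @ u @ v)")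
    case True
    with assms that[of "[]"] show ?thesis by simp
  next
    case False
    then obtain y where "w = t @ u @ v @ y"
      using mem_S_short[OF assms] by (auto simp: prefix_def)
    with that[of y] stem_in_S length_stem show ?thesis by simp
  qed
  then obtain p where "(t @ u @ v @ y) @ p @ (t @ u @ v @ y) \<in> S"
    using return_to_self_mem_S by blast
  then have "t @ u @ v @ (y @ p @ t) @ u \<in> S"
    by (rule prefix_mem_S) simp
  then show ?thesis by blast
qed

end

text \<open>Connectedness of the automaton and the absence of active self-liftable branches are not
  needed for this statement about finite words.\<close>
theorem theorem5p7:
  fixes d :: "'s::finite \<Rightarrow> 'q::finite \<Rightarrow> 'q"
    and r :: "'q \<Rightarrow> 's \<Rightarrow> 's"
    and vs :: "'q list set list" and n :: nat and S :: "'q list set"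
  assumes "connected_aut d"
    and "bireversible d r"
    and "\<not> (\<exists>V. is_branch d r V \<and> active_branch V \<and> self_liftable_branch V)"
    and "jungle_trunk d r vs n"
    and "liana d r vs S"
  shows "\<forall>t u v. t @ u @ v \<in> S \<longrightarrow> (\<exists>w. t @ u @ v @ w @ u \<in> S)"
proof -
  from assms(5) obtain w L where "jungle_liana d r vs n S w L"
    using assms(2,4) unfolding liana_def jungle_liana_def by blast
  then show ?thesis using jungle_liana.recurrence by blast
qed

end
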